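(* Let $P(t)=\binom{r+t}{r}-\binom{r+t-d}{r}$. For every $x\in\mathrm{Hilb}^P(\mathbb{P}^r_k)$ that is unstable (at level $d$) there exists $g_x\in G=\mathrm{GL}_{r+1}(k)$ such that $$|\Delta_{g_x.x,d}|=\max_{h\in G}|\Delta_{h.x,d}|\quad\text{and}\quad n_{H_x}=n_{H_{g_x.x}}=n_{e,H_{g_x.x}},$$ where $e=[1:0:\cdots:0]$.
   Context: $k$ is an algebraically closed field, $S=k[x_0,\dots,x_r]$, $S_d$ its degree-$d$ part; points $x$ of $\mathrm{Hilb}^P(\mathbb{P}^r_k)$ are hypersurfaces $H_x=V(f)$ with $0\ne f\in S_d$. $G$ acts on $S_1=\mathrm{span}(x_0,\dots,x_r)$ by the standard representation, hence on $S$; $g.x$ corresponds to $V(g.f)$. $T$ is the diagonal torus of $\mathrm{SL}_{r+1}(k)$; $\lambda=(a_0,\dots,a_r)$ with $\sum a_i=0$ denotes $s\mapsto\mathrm{diag}(s^{a_i})$, with Euclidean norm $\Vert\lambda\Vert$. The state $\Xi_{x,d}$ is the set of exponent vectors in $\mathbb{R}^{r+1}$ of the monomials with nonzero coefficient in $f$, and $|\Delta_{x,d}|=\max_{0\ne\lambda\in\Gamma(T)}\min_{m\in\Xi_{x,d}}\langle\lambda,m\rangle/\Vert\lambda\Vert$ (the distance from $\frac{d}{r+1}(1,\dots,1)$ to the convex hull of $\Xi_{x,d}$). $x$ is unstable iff $\max_{h\in G}|\Delta_{h.x,d}|>0$ (equivalently, some one-parameter subgroup $\lambda$ of $\mathrm{SL}_{r+1}(k)$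 has positive Hilbert–Mumford weight $\mu([f],\lambda)$, the minimal $\lambda$-weight of a nonzero component of $f$). Multiplicity: for $X=V(f)$, writing $f=\sum_j x_0^{d-j}f_j(x_1,\dots,x_r)$ with $f_j$ homogeneous of degree $j$, $n_{e,X}=\min\{j:f_j\ne0\}$; for a point $p$, $n_{p,X}$ is defined likewise after a linear coordinate change sending $p$ to $e$ (coordinate independent; the degree of the tangent cone), and $n_X=\max_{p\in\mathbb{P}^r_k}n_{p,X}$. *)

theory Defs
  imports "HOL-Analysis.Analysis" "HOL-Library.Poly_Mapping"
begin

text \<open>Polynomials in the variables x_0, x_1, ... over a field: finitely supported maps
  from exponent vectors exponent vectors to coefficients.\<close>
type_synonym 'k mpoly = "(nat \<Rightarrow>\<^sub>0 nat) \<Rightarrow>\<^sub>0 'k"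

definition alg_closed_field :: "'k::field itself \<Rightarrow> bool" where
  "alg_closed_field _ \<longleftrightarrow>
     (\<forall>n>0. \<forall>c :: nat \<Rightarrow> 'k. \<exists>z. z ^ n + (\<Sum>i<n. c i * z ^ i) = 0)"

definition Var :: "nat \<Rightarrow> 'k::comm_ring_1 mpoly" where
  "Var i = Poly_Mapping.single (Poly_Mapping.single i 1) 1"

definition Const :: "'k::comm_ring_1 \<Rightarrow> 'k mpoly" where
  "Const c = Poly_Mapping.single 0 c"

definition mdeg :: "(nat \<Rightarrow>\<^sub>0 nat) \<Rightarrow> nat" where
  "mdeg m = (\<Sum>i\<in>Poly_Mapping.keys m. Poly_Mapping.lookup m i)"

definition is_form :: "nat \<Rightarrow> nat \<Rightarrow> 'k::field mpoly \<Rightarrow> bool" where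
  "is_form r d f \<longleftrightarrow> f \<noteq> 0 \<and>
     (\<forall>m\<in>Poly_Mapping.keys f. Poly_Mapping.keys m \<subseteq> {..r} \<and> mdeg m = d)"

text \<open>GL_{r+1}(k), matrices indexed by {0..r} (entries outside are irrelevant).\<close>
definition GL :: "nat \<Rightarrow> (nat \<Rightarrow> nat \<Rightarrow> 'k::field) set" where
  "GL r = {g. \<exists>h. \<forall>i\<le>r. \<forall>l\<le>r.
      (\<Sum>j\<le>r. g i j * h j l) = (if i = l then 1 else 0)}"

text \<open>Linear substitution x_j \<mapsto> \<Sum>_i A j i x_i, i.e. (subst A f)(y) = f(A y).\<close>
definition subst :: "nat \<Rightarrow> (nat \<Rightarrow> nat \<Rightarrow> 'k::field) \<Rightarrow> 'k mpoly \<Rightarrow> 'k mpoly" where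
  "subst r A f = (\<Sum>m\<in>Poly_Mapping.keys f. Const (Poly_Mapping.lookup f m) *
      (\<Prod>j\<in>Poly_Mapping.keys m. (\<Sum>i\<le>r. Const (A j i) * Var i) ^ Poly_Mapping.lookup m j))"

text \<open>Action of g on S induced by the standard representation on S_1:
  g.x_j = \<Sum>_i g_{ij} x_i.\<close>
definition act :: "nat \<Rightarrow> (nat \<Rightarrow> nat \<Rightarrow> 'k::field) \<Rightarrow> 'k mpoly \<Rightarrow> 'k mpoly" where
  "act r g f = subst r (\<lambda>j i. g i j) f"

text \<open>Gamma(T) minus 0: one-parameter subgroups of the diagonal torus of SL_{r+1}.\<close>
definition OPS :: "nat \<Rightarrow> (nat \<Rightarrow> int) set" where
  "OPS r = {lam. (\<forall>i>r. lam i = 0) \<and> (\<Sum>i\<le>r. lam i) = 0 \<and> (\<exists>i\<le>r. lam i \<noteq> 0)}"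

definition ops_norm :: "nat \<Rightarrow> (nat \<Rightarrow> int) \<Rightarrow> real" where
  "ops_norm r lam = sqrt (\<Sum>i\<le>r. (real_of_int (lam i))\<^sup>2)"

definition pairing :: "nat \<Rightarrow> (nat \<Rightarrow> int) \<Rightarrow> (nat \<Rightarrow>\<^sub>0 nat) \<Rightarrow> real" where
  "pairing r lam m = (\<Sum>i\<le>r. real_of_int (lam i) * real (Poly_Mapping.lookup m i))"

text \<open>The state Xi_{x,d} is the support of f.\<close>
definition Delta :: "nat \<Rightarrow> 'k::field mpoly \<Rightarrow> real" where
  "Delta r f = (SUP lam\<in>OPS r. Min ((\<lambda>m. pairing r lam m) ` Poly_Mapping.keys f) / ops_norm r lam)"

definition unstable :: "nat \<Rightarrow> 'k::field mpoly \<Rightarrow> bool" where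
  "unstable r f \<longleftrightarrow> (SUP h\<in>GL r. Delta r (act r h f)) > 0"

text \<open>n_{e,X}: writing f = \<Sum>_j x_0^{d-j} f_j, the least j with f_j \<noteq> 0.\<close>
definition mult_e :: "nat \<Rightarrow> 'k::field mpoly \<Rightarrow> nat" where
  "mult_e d f = Min ((\<lambda>m. d - Poly_Mapping.lookup m 0) ` Poly_Mapping.keys f)"

text \<open>Nonzero vectors representing points of P^r.\<close>
definition proj_pts :: "nat \<Rightarrow> (nat \<Rightarrow> 'k::field) set" where
  "proj_pts r = {p. (\<forall>i>r. p i = 0) \<and> (\<exists>i\<le>r. p i \<noteq> 0)}"

text \<open>n_{p,X}: multiplicity at e after a linear coordinate change A sending e to p.\<close>
definition mult_at :: "nat \<Rightarrow> nat \<Rightarrow> 'k::field mpoly \<Rightarrow> (nat \<Rightarrow> 'k) \<Rightarrow> nat" where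
  "mult_at r d f p = mult_e d (subst r
      (SOME A. A \<in> GL r \<and> (\<forall>i\<le>r. A i 0 = p i)) f)"

definition mult_max :: "nat \<Rightarrow> nat \<Rightarrow> 'k::field mpoly \<Rightarrow> nat" where
  "mult_max r d f = Max ((\<lambda>p. mult_at r d f p) ` proj_pts r)"

end

theory Submission
  imports Defs "Jordan_Normal_Form.Determinant" "HOL-Combinatorics.Transposition"
begin

text \<open>
  The state of a form is a set of exponent vectors of degree \<open>d\<close> in \<open>r + 1\<close> variables, so
  \<open>\<Delta>\<close> takes only finitely many values on an orbit and its supremum is attained at some
  \<open>F = g\<^sub>0.f\<close>. Let \<open>p\<close> be a point of maximal multiplicity on \<open>V(F)\<close>. For every \<open>k\<close> with
  \<open>p\<^sub>k \<noteq> 0\<close> there is a coordinate change \<open>T\<^sub>k\<close> sending \<open>e\<close> to \<open>p\<close>: the shear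
  \<open>x\<^sub>j \<mapsto> x\<^sub>j + p\<^sub>j x\<^sub>k\<close> (\<open>j \<noteq> k\<close>), \<open>x\<^sub>k \<mapsto> p\<^sub>k x\<^sub>k\<close>, followed by the transposition of \<open>x\<^sub>0\<close> and \<open>x\<^sub>k\<close>.
  Given a one-parameter subgroup \<open>\<lambda>\<close>, choose \<open>k\<close> in the support of \<open>p\<close> with \<open>\<lambda>\<^sub>k\<close> maximal:
  then the shear cannot lower any \<open>\<lambda>\<close>-weight and the transposition only permutes \<open>\<lambda>\<close>.
  Hence \<open>\<Delta>(F) \<le> max\<^sub>k \<Delta>(T\<^sub>k F)\<close>, so some \<open>T\<^sub>k F\<close> is again a maximiser, and its multiplicity
  at \<open>e\<close> is the multiplicity of \<open>F\<close> at \<open>p\<close>, i.e. the maximal one.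
\<close>

definition mat_mult :: "nat \<Rightarrow> (nat \<Rightarrow> nat \<Rightarrow> 'k::field) \<Rightarrow> (nat \<Rightarrow> nat \<Rightarrow> 'k) \<Rightarrow> nat \<Rightarrow> nat \<Rightarrow> 'k"
  where "mat_mult r A B = (\<lambda>i l. \<Sum>j\<le>r. A i j * B j l)"

definition is_id :: "nat \<Rightarrow> (nat \<Rightarrow> nat \<Rightarrow> 'k::field) \<Rightarrow> bool"
  where "is_id r X \<longleftrightarrow> (\<forall>i\<le>r. \<forall>l\<le>r. X i l = (if i = l then 1 else 0))"

definition mat_transpose :: "(nat \<Rightarrow> nat \<Rightarrow> 'k) \<Rightarrow> nat \<Rightarrow> nat \<Rightarrow> 'k"
  where "mat_transpose X = (\<lambda>i j. X j i)"

lemma GL_iff: "g \<in> GL r \<longleftrightarrow> (\<exists>h. is_id r (mat_mult r g h))"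
  by (simp add: GL_def is_id_def mat_mult_def)

lemma is_id_mat_mult_commute:
  fixes A B :: "nat \<Rightarrow> nat \<Rightarrow> 'k::field"
  assumes "is_id r (mat_mult r A B)"
  shows "is_id r (mat_mult r B A)"
proof -
  define n where "n = Suc r"
  define MA where "MA = mat n n (\<lambda>(i, j). A i j)"
  define MB where "MB = mat n n (\<lambda>(i, j). B i j)"
  have lt: "{..<n} = {..r}" by (auto simp: n_def)
  have "MA * MB = 1\<^sub>m n"
  proof (rule eq_matI)
    fix i j assume ij: "i < dim_row (1\<^sub>m n)" "j < dim_col (1\<^sub>m n)"
    then have "(MA * MB) $$ (i, j) = (\<Sum>x<n. A i x * B x j)"
      by (simp add: MA_def MB_def scalar_prod_def atLeast0LessThan)
    also have "\<dots> = mat_mult r A B i j" by (simp add: mat_mult_def lt)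
    also have "\<dots> = 1\<^sub>m n $$ (i, j)" using assms ij by (simp add: is_id_def n_def)
    finally show "(MA * MB) $$ (i, j) = 1\<^sub>m n $$ (i, j)" .
  qed (auto simp: MA_def MB_def)
  then have BA: "MB * MA = 1\<^sub>m n"
    using mat_mult_left_right_inverse[of MA n MB] by (simp add: MA_def MB_def)
  show ?thesis unfolding is_id_def
  proof (intro allI impI)
    fix i l assume "i \<le> r" "l \<le> r"
    then have il: "i < n" "l < n" by (auto simp: n_def)
    have "mat_mult r B A i l = (\<Sum>x<n. B i x * A x l)" by (simp add: mat_mult_def lt)
    also have "\<dots> = (MB * MA) $$ (i, l)"
      using il by (simp add: MA_def MB_def scalar_prod_def atLeast0LessThan)
    finally have "mat_mult r B A i l = (MB * MA) $$ (i, l)" .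
    then show "mat_mult r B A i l = (if i = l then 1 else 0)" using il by (simp add: BA)
  qed
qed

lemma mat_mult_assoc: "mat_mult r (mat_mult r A B) C = mat_mult r A (mat_mult r B C)"
  by (auto simp: mat_mult_def fun_eq_iff sum_distrib_left sum_distrib_right mult.assoc
      intro: sum.swap)

lemma mat_mult_id_left:
  assumes "is_id r A" "i \<le> r"
  shows "mat_mult r A B i l = B i l"
proof -
  have "(\<Sum>j\<le>r. A i j * B j l) = (\<Sum>j\<le>r. if j = i then B j l else 0)"
    by (rule sum.cong) (use assms in \<open>auto simp: is_id_def\<close>)
  then show ?thesis using assms by (simp add: mat_mult_def)
qed

lemma mat_mult_transpose:
  "mat_mult r (mat_transpose A) (mat_transpose B) = mat_transpose (mat_mult r B A)"
  by (simp add: mat_mult_def mat_transpose_def fun_eq_iff mult.commute)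

lemma is_id_transpose: "is_id r (mat_transpose X) = is_id r X"
  by (auto simp: is_id_def mat_transpose_def)

lemma GL_inverseE:
  assumes "g \<in> GL r"
  obtains h where "h \<in> GL r" "is_id r (mat_mult r h g)" "is_id r (mat_mult r g h)"
proof -
  obtain h where h: "is_id r (mat_mult r g h)" using assms GL_iff by blast
  then have "is_id r (mat_mult r h g)" by (rule is_id_mat_mult_commute)
  then show ?thesis using that h GL_iff by blast
qed

lemma GL_mat_mult:
  assumes "g \<in> GL r" "h \<in> GL r"
  shows "mat_mult r g h \<in> GL r"
proof -
  obtain g' where g': "is_id r (mat_mult r g g')" using assms GL_iff by blast
  obtain h' where h': "is_id r (mat_mult r h h')" using assms GL_iff by blast
  have "mat_mult r (mat_mult r g h) (mat_mult r h' g') i l = mat_mult r g g' i l" for i l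
  proof -
    have "mat_mult r (mat_mult r g h) (mat_mult r h' g') i l =
        mat_mult r g (mat_mult r (mat_mult r h h') g') i l"
      by (simp add: mat_mult_assoc)
    also have "\<dots> = mat_mult r g g' i l"
      unfolding mat_mult_def[of r g] by (intro sum.cong) (simp_all add: mat_mult_id_left[OF h'])
    finally show ?thesis .
  qed
  then have "is_id r (mat_mult r (mat_mult r g h) (mat_mult r h' g'))"
    using g' by (simp add: is_id_def)
  then show ?thesis using GL_iff by blast
qed

lemma GL_transpose:
  assumes "g \<in> GL r"
  shows "mat_transpose g \<in> GL r"
proof -
  obtain h where "is_id r (mat_mult r h g)" using assms by (rule GL_inverseE)
  then have "is_id r (mat_mult r (mat_transpose g) (mat_transpose h))"
    by (simp add: mat_mult_transpose is_id_transpose)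
  then show ?thesis using GL_iff by blast
qed

lemma GL_id: "(\<lambda>i j. if i = j then 1 else 0 :: 'k::field) \<in> GL r"
proof -
  have I: "is_id r (\<lambda>i j. if i = j then 1 else 0 :: 'k)" by (simp add: is_id_def)
  then have "is_id r (mat_mult r (\<lambda>i j. if i = j then 1 else 0 :: 'k) (\<lambda>i j. if i = j then 1 else 0))"
    using mat_mult_id_left[OF I] by (simp add: is_id_def)
  then show ?thesis using GL_iff by blast
qed

lemma lookup_Const_mult: "Poly_Mapping.lookup (Const c * p) m = c * Poly_Mapping.lookup p m"
  by (simp add: Const_def mult_map_scale_conv_mult[symmetric] map.rep_eq when_def)

lemma keys_Const_mult: "Poly_Mapping.keys (Const c * p) \<subseteq> Poly_Mapping.keys p"
  by (auto simp: in_keys_iff lookup_Const_mult)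

lemma Const_mult_single: "Const c * Poly_Mapping.single m a = Poly_Mapping.single m (c * a)"
  by (simp add: Const_def mult_single)

lemma Const_mult_Const: "Const a * Const b = Const (a * b)"
  by (simp add: Const_def mult_single)

lemma Const_add: "Const (a + b) = Const a + Const b"
  by (simp add: Const_def single_add)

lemma Const_0 [simp]: "Const 0 = 0"
  by (simp add: Const_def)

lemma Const_1 [simp]: "Const 1 = 1"
  by (simp add: Const_def)

lemma Const_sum: "Const (\<Sum>i\<in>S. f i) = (\<Sum>i\<in>S. Const (f i))"
  by (induction S rule: infinite_finite_induct) (auto simp: Const_add)

lemma sum_single_lookup:
  "(\<Sum>m\<in>Poly_Mapping.keys p. Poly_Mapping.single m (Poly_Mapping.lookup p m)) = p"
  by (rule poly_mapping_eqI) (simp add: lookup_sum lookup_single when_def in_keys_iff)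

definition lin_form :: "nat \<Rightarrow> (nat \<Rightarrow> nat \<Rightarrow> 'k::field) \<Rightarrow> nat \<Rightarrow> 'k mpoly"
  where "lin_form r A j = (\<Sum>i\<le>r. Const (A j i) * Var i)"

definition subst_monom :: "nat \<Rightarrow> (nat \<Rightarrow> nat \<Rightarrow> 'k::field) \<Rightarrow> (nat \<Rightarrow>\<^sub>0 nat) \<Rightarrow> 'k mpoly"
  where "subst_monom r A m = (\<Prod>j\<in>Poly_Mapping.keys m. lin_form r A j ^ Poly_Mapping.lookup m j)"

lemma subst_eq_sum_subst_monom:
  "subst r A f = (\<Sum>m\<in>Poly_Mapping.keys f. Const (Poly_Mapping.lookup f m) * subst_monom r A m)"
  by (simp add: subst_def subst_monom_def lin_form_def)

lemma subst_monom_superset: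
  assumes "finite S" "Poly_Mapping.keys m \<subseteq> S"
  shows "subst_monom r A m = (\<Prod>j\<in>S. lin_form r A j ^ Poly_Mapping.lookup m j)"
  unfolding subst_monom_def
  by (rule prod.mono_neutral_left) (use assms in \<open>auto simp: not_in_keys_iff_lookup_eq_zero\<close>)

lemma subst_monom_add: "subst_monom r A (m + m') = subst_monom r A m * subst_monom r A m'"
proof -
  let ?S = "Poly_Mapping.keys m \<union> Poly_Mapping.keys m'"
  have "subst_monom r A (m + m') = (\<Prod>j\<in>?S. lin_form r A j ^ Poly_Mapping.lookup (m + m') j)"
    by (rule subst_monom_superset) (simp_all add: keys_add)
  also have "\<dots> = (\<Prod>j\<in>?S. lin_form r A j ^ Poly_Mapping.lookup m j) *
                  (\<Prod>j\<in>?S. lin_form r A j ^ Poly_Mapping.lookup m' j)"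
    by (simp add: lookup_add power_add prod.distrib)
  also have "\<dots> = subst_monom r A m * subst_monom r A m'"
    by (simp add: subst_monom_superset[of ?S m] subst_monom_superset[of ?S m'])
  finally show ?thesis .
qed

lemma subst_superset:
  assumes "finite S" "Poly_Mapping.keys f \<subseteq> S"
  shows "subst r A f = (\<Sum>m\<in>S. Const (Poly_Mapping.lookup f m) * subst_monom r A m)"
  unfolding subst_eq_sum_subst_monom
  by (rule sum.mono_neutral_left) (use assms in \<open>auto simp: not_in_keys_iff_lookup_eq_zero\<close>)

lemma subst_add: "subst r A (f + g) = subst r A f + subst r A g"
proof -
  let ?S = "Poly_Mapping.keys f \<union> Poly_Mapping.keys g"
  have "subst r A (f + g) = (\<Sum>m\<in>?S. Const (Poly_Mapping.lookup (f + g) m) * subst_monom r A m)"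
    by (rule subst_superset) (simp_all add: keys_add)
  also have "\<dots> = (\<Sum>m\<in>?S. Const (Poly_Mapping.lookup f m) * subst_monom r A m) +
                  (\<Sum>m\<in>?S. Const (Poly_Mapping.lookup g m) * subst_monom r A m)"
    by (simp add: lookup_add Const_add distrib_right sum.distrib)
  also have "\<dots> = subst r A f + subst r A g"
    by (simp add: subst_superset[of ?S f] subst_superset[of ?S g])
  finally show ?thesis .
qed

lemma subst_zero [simp]: "subst r A 0 = 0"
  by (simp add: subst_def)

lemma subst_sum: "subst r A (\<Sum>i\<in>S. f i) = (\<Sum>i\<in>S. subst r A (f i))"
  by (induction S rule: infinite_finite_induct) (auto simp: subst_add)

lemma subst_single: "subst r A (Poly_Mapping.single m c) = Const c * subst_monom r A m"
  by (subst subst_superset[of "{m}"]) auto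

lemma subst_mult: "subst r A (f * g) = subst r A f * subst r A g"
proof -
  let ?F = "Poly_Mapping.keys f" and ?G = "Poly_Mapping.keys g"
  have "f * g = (\<Sum>m\<in>?F. \<Sum>m'\<in>?G.
      Poly_Mapping.single (m + m') (Poly_Mapping.lookup f m * Poly_Mapping.lookup g m'))"
    by (subst (1 2) sum_single_lookup[symmetric]) (simp add: sum_product mult_single)
  then have "subst r A (f * g) = (\<Sum>m\<in>?F. \<Sum>m'\<in>?G.
      Const (Poly_Mapping.lookup f m) * subst_monom r A m *
      (Const (Poly_Mapping.lookup g m') * subst_monom r A m'))"
    by (simp add: subst_sum subst_single subst_monom_add Const_mult_Const[symmetric] algebra_simps)
  also have "\<dots> = subst r A f * subst r A g"
    by (simp add: subst_eq_sum_subst_monom sum_product)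
  finally show ?thesis .
qed

lemma subst_one [simp]: "subst r A 1 = 1"
  using subst_single[of r A 0 1] by (simp add: subst_monom_def)

lemma subst_power: "subst r A (f ^ n) = subst r A f ^ n"
  by (induction n) (auto simp: subst_mult)

lemma subst_prod: "subst r A (\<Prod>i\<in>S. f i) = (\<Prod>i\<in>S. subst r A (f i))"
  by (induction S rule: infinite_finite_induct) (auto simp: subst_mult)

lemma subst_Const: "subst r A (Const c) = Const c"
  using subst_single[of r A 0 c] by (simp add: subst_monom_def Const_def)

lemma subst_Var: "subst r A (Var j) = lin_form r A j"
  by (simp add: Var_def subst_single subst_monom_def)

lemma subst_lin_form: "subst r A (lin_form r B j) = lin_form r (mat_mult r B A) j"
proof -
  have "subst r A (lin_form r B j) = (\<Sum>k\<le>r. \<Sum>i\<le>r. Const (B j k * A k i) * Var i)"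
    by (simp add: lin_form_def subst_sum subst_mult subst_Const subst_Var sum_distrib_left
        Const_mult_Const[symmetric] mult.assoc)
  also have "\<dots> = lin_form r (mat_mult r B A) j"
    by (subst sum.swap) (simp add: lin_form_def mat_mult_def Const_sum sum_distrib_right)
  finally show ?thesis .
qed

lemma subst_subst: "subst r A (subst r B f) = subst r (mat_mult r B A) f"
  by (simp add: subst_eq_sum_subst_monom[of r B] subst_eq_sum_subst_monom[of r "mat_mult r B A"]
      subst_sum subst_mult subst_Const subst_monom_def subst_prod subst_power subst_lin_form)

lemma act_eq_subst: "act r g f = subst r (mat_transpose g) f"
  by (simp add: act_def mat_transpose_def)

lemma act_act: "act r g (act r h f) = act r (mat_mult r g h) f"
  by (simp add: act_eq_subst subst_subst mat_mult_transpose)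

section \<open>Bounding additive weights on the support of a substitution\<close>

definition additive_weight :: "((nat \<Rightarrow>\<^sub>0 nat) \<Rightarrow> real) \<Rightarrow> bool"
  where "additive_weight w \<longleftrightarrow> (\<forall>a b. w (a + b) = w a + w b)"

definition weight_bounded :: "((nat \<Rightarrow>\<^sub>0 nat) \<Rightarrow> real) \<Rightarrow> real \<Rightarrow> 'k::field mpoly \<Rightarrow> bool"
  where "weight_bounded w c p \<longleftrightarrow> (\<forall>m\<in>Poly_Mapping.keys p. w m \<le> c)"

lemma additive_weight_0: "additive_weight w \<Longrightarrow> w 0 = 0"
  unfolding additive_weight_def by (metis add.right_neutral add_cancel_right_right)

lemma weight_bounded_sum:
  "(\<And>i. i \<in> S \<Longrightarrow> weight_bounded w c (f i)) \<Longrightarrow> weight_bounded w c (\<Sum>i\<in>S. f i)"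
  using keys_sum[of f S] by (fastforce simp: weight_bounded_def)

lemma weight_bounded_mult:
  assumes "additive_weight w" "weight_bounded w a p" "weight_bounded w b q"
  shows "weight_bounded w (a + b) (p * q)"
  using keys_mult[of p q] assms
  by (fastforce simp: weight_bounded_def additive_weight_def intro: add_mono)

lemma weight_bounded_prod_power:
  assumes w: "additive_weight w" and "finite S" and "\<And>j. j \<in> S \<Longrightarrow> weight_bounded w (a j) (p j)"
  shows "weight_bounded w (\<Sum>j\<in>S. real (n j) * a j) (\<Prod>j\<in>S. p j ^ n j)"
  using assms(2,3)
proof (induction S rule: finite_induct)
  case empty
  then show ?case using additive_weight_0[OF w] by (simp add: weight_bounded_def)
next
  case (insert x F)
  have "weight_bounded w (real k * a x) (p x ^ k)" for k
  proof (induction k)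
    case 0
    then show ?case using additive_weight_0[OF w] by (simp add: weight_bounded_def)
  next
    case (Suc k)
    have "weight_bounded w (a x + real k * a x) (p x * p x ^ k)"
      using insert.prems Suc by (intro weight_bounded_mult[OF w]) auto
    then show ?case by (simp add: algebra_simps)
  qed
  then show ?case using insert by (simp add: weight_bounded_mult[OF w])
qed

lemma weight_bounded_subst:
  assumes w: "additive_weight w"
    and lin: "\<And>m j i. m \<in> Poly_Mapping.keys f \<Longrightarrow> j \<in> Poly_Mapping.keys m \<Longrightarrow> i \<le> r \<Longrightarrow>
               A j i \<noteq> 0 \<Longrightarrow> w (Poly_Mapping.single i 1) \<le> a j"
    and mon: "\<And>m. m \<in> Poly_Mapping.keys f \<Longrightarrow>
               (\<Sum>j\<in>Poly_Mapping.keys m. real (Poly_Mapping.lookup m j) * a j) \<le> c"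
  shows "weight_bounded w c (subst r A f)"
  unfolding subst_eq_sum_subst_monom
proof (rule weight_bounded_sum)
  fix m assume m: "m \<in> Poly_Mapping.keys f"
  have "weight_bounded w (a j) (Const (A j i) * Var i)" if "j \<in> Poly_Mapping.keys m" "i \<le> r" for i j
    using lin[OF m that] keys_Const_mult[of 0 "Var i"]
    by (cases "A j i = 0") (auto simp: weight_bounded_def Var_def Const_mult_single)
  then have "weight_bounded w (a j) (lin_form r A j)" if "j \<in> Poly_Mapping.keys m" for j
    unfolding lin_form_def using that by (blast intro: weight_bounded_sum)
  then have "weight_bounded w (\<Sum>j\<in>Poly_Mapping.keys m. real (Poly_Mapping.lookup m j) * a j)
      (subst_monom r A m)"
    unfolding subst_monom_def by (intro weight_bounded_prod_power[OF w]) auto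
  then show "weight_bounded w c (Const (Poly_Mapping.lookup f m) * subst_monom r A m)"
    using mon[OF m] keys_Const_mult by (fastforce simp: weight_bounded_def)
qed

lemma additive_weight_lookup: "additive_weight (\<lambda>m. real (Poly_Mapping.lookup m i))"
  by (simp add: additive_weight_def lookup_add)

lemma additive_weight_pairing: "additive_weight (\<lambda>m. - pairing r lam m)"
  by (simp add: additive_weight_def pairing_def lookup_add sum.distrib algebra_simps)

definition deg_upto :: "nat \<Rightarrow> (nat \<Rightarrow>\<^sub>0 nat) \<Rightarrow> nat"
  where "deg_upto r m = (\<Sum>i\<le>r. Poly_Mapping.lookup m i)"

text \<open>Polynomials in \<open>x\<^sub>0, \<dots>, x\<^sub>r\<close> of degree at most \<open>d\<close>; unlike \<open>is_form\<close> this is closed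
  under all linear substitutions, including singular ones.\<close>

definition poly_deg_le :: "nat \<Rightarrow> nat \<Rightarrow> 'k::field mpoly \<Rightarrow> bool"
  where "poly_deg_le r d p \<longleftrightarrow>
    (\<forall>m\<in>Poly_Mapping.keys p. Poly_Mapping.keys m \<subseteq> {..r} \<and> deg_upto r m \<le> d)"

lemma sum_keys_eq_sum_upto:
  assumes "Poly_Mapping.keys (m :: nat \<Rightarrow>\<^sub>0 nat) \<subseteq> {..r}" "\<And>j. g j 0 = 0"
  shows "(\<Sum>j\<in>Poly_Mapping.keys m. g j (Poly_Mapping.lookup m j)) = (\<Sum>j\<le>r. g j (Poly_Mapping.lookup m j))"
  by (rule sum.mono_neutral_left) (use assms in \<open>auto simp: not_in_keys_iff_lookup_eq_zero\<close>)

lemma mdeg_eq_deg_upto: "Poly_Mapping.keys m \<subseteq> {..r} \<Longrightarrow> mdeg m = deg_upto r m"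
  unfolding mdeg_def deg_upto_def using sum_keys_eq_sum_upto[of m r "\<lambda>j x. x"] by simp

lemma is_form_imp_poly_deg_le: "is_form r d f \<Longrightarrow> poly_deg_le r d f"
  by (auto simp: is_form_def poly_deg_le_def mdeg_eq_deg_upto[symmetric])

lemma pairing_eq_sum_keys:
  "Poly_Mapping.keys m \<subseteq> {..r} \<Longrightarrow>
    pairing r lam m = (\<Sum>j\<in>Poly_Mapping.keys m. real (Poly_Mapping.lookup m j) * real_of_int (lam j))"
  unfolding pairing_def using sum_keys_eq_sum_upto[of m r "\<lambda>j x. real x * real_of_int (lam j)"]
  by (simp add: mult.commute)

lemma keys_subst_vars:
  assumes "m \<in> Poly_Mapping.keys (subst r A f)"
  shows "Poly_Mapping.keys m \<subseteq> {..r}"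
proof
  fix i assume i: "i \<in> Poly_Mapping.keys m"
  show "i \<in> {..r}"
  proof (rule ccontr)
    assume "i \<notin> {..r}"
    then have "weight_bounded (\<lambda>m. real (Poly_Mapping.lookup m i)) 0 (subst r A f)"
      by (intro weight_bounded_subst[OF additive_weight_lookup, where a = "\<lambda>_. 0"])
        (auto simp: lookup_single)
    then show False using assms i by (auto simp: weight_bounded_def in_keys_iff)
  qed
qed

lemma poly_deg_le_subst:
  assumes "poly_deg_le r d f"
  shows "poly_deg_le r d (subst r A f)"
proof -
  have "additive_weight (\<lambda>m. real (deg_upto r m))"
    by (simp add: additive_weight_def deg_upto_def lookup_add sum.distrib)
  moreover have "real (deg_upto r (Poly_Mapping.single i 1)) \<le> 1" for i
    by (simp add: deg_upto_def lookup_single when_def)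
  moreover have "(\<Sum>j\<in>Poly_Mapping.keys m. real (Poly_Mapping.lookup m j) * 1) \<le> real d"
    if "m \<in> Poly_Mapping.keys f" for m
    using assms that mdeg_eq_deg_upto[of m r]
    by (simp add: poly_deg_le_def mdeg_def flip: of_nat_sum)
  ultimately have "weight_bounded (\<lambda>m. real (deg_upto r m)) (real d) (subst r A f)"
    by (intro weight_bounded_subst[where a = "\<lambda>_. 1"]) auto
  then show ?thesis
    using keys_subst_vars[of _ r A f] by (auto simp: poly_deg_le_def weight_bounded_def)
qed

lemma pairing_subst_ge:
  assumes F: "poly_deg_le r d F"
    and A: "\<And>j i. j \<le> r \<Longrightarrow> i \<le> r \<Longrightarrow> A j i \<noteq> 0 \<Longrightarrow> mu j \<le> lam i"
    and c: "\<And>m. m \<in> Poly_Mapping.keys F \<Longrightarrow> c \<le> pairing r mu m"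
    and m: "m \<in> Poly_Mapping.keys (subst r A F)"
  shows "c \<le> pairing r lam m"
proof -
  have "weight_bounded (\<lambda>m. - pairing r lam m) (- c) (subst r A F)"
  proof (rule weight_bounded_subst[OF additive_weight_pairing, where a = "\<lambda>j. - real_of_int (mu j)"])
    fix m j i assume "m \<in> Poly_Mapping.keys F" "j \<in> Poly_Mapping.keys m" "i \<le> r" "A j i \<noteq> 0"
    then show "- pairing r lam (Poly_Mapping.single i 1) \<le> - real_of_int (mu j)"
      using A F by (auto simp: poly_deg_le_def pairing_eq_sum_keys)
  next
    fix m assume "m \<in> Poly_Mapping.keys F"
    then show "(\<Sum>j\<in>Poly_Mapping.keys m. real (Poly_Mapping.lookup m j) * - real_of_int (mu j)) \<le> - c"
      using c F by (auto simp: poly_deg_le_def pairing_eq_sum_keys sum_negf)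
  qed
  then show ?thesis using m by (auto simp: weight_bounded_def)
qed

lemma lookup0_subst_le:
  assumes F: "poly_deg_le r d F"
    and C: "\<And>j. 1 \<le> j \<Longrightarrow> j \<le> r \<Longrightarrow> C j 0 = 0"
    and M: "\<And>m. m \<in> Poly_Mapping.keys F \<Longrightarrow> Poly_Mapping.lookup m 0 \<le> M"
    and m: "m \<in> Poly_Mapping.keys (subst r C F)"
  shows "Poly_Mapping.lookup m 0 \<le> M"
proof -
  have "weight_bounded (\<lambda>m. real (Poly_Mapping.lookup m 0)) (real M) (subst r C F)"
  proof (rule weight_bounded_subst[OF additive_weight_lookup, where a = "\<lambda>j. if j = 0 then 1 else 0"])
    fix m j i assume "m \<in> Poly_Mapping.keys F" "j \<in> Poly_Mapping.keys m" "i \<le> r" "C j i \<noteq> 0"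
    moreover from this(1,2) have "j \<le> r" using F by (auto simp: poly_deg_le_def)
    ultimately show "real (Poly_Mapping.lookup (Poly_Mapping.single i 1) 0) \<le> (if j = 0 then 1 else 0)"
      using C[of j] by (cases "i = 0"; cases "j = 0") (auto simp: lookup_single when_def)
  next
    fix m assume "m \<in> Poly_Mapping.keys F"
    then show "(\<Sum>j\<in>Poly_Mapping.keys m. real (Poly_Mapping.lookup m j) * (if j = 0 then 1 else 0)) \<le> real M"
      using M by (simp add: if_distrib cong: if_cong)
  qed
  then show ?thesis using m by (auto simp: weight_bounded_def)
qed

lemma lin_form_id: "is_id r X \<Longrightarrow> j \<le> r \<Longrightarrow> lin_form r X j = Var j"
proof -
  assume X: "is_id r X" and j: "j \<le> r"
  have "lin_form r X j = (\<Sum>i\<le>r. if i = j then Var j else 0)"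
    unfolding lin_form_def by (rule sum.cong) (use X j in \<open>auto simp: is_id_def\<close>)
  then show ?thesis using j by simp
qed

lemma Var_power: "(Var j :: 'k::field mpoly) ^ n = Poly_Mapping.single (Poly_Mapping.single j n) 1"
  by (induction n) (auto simp: Var_def mult_single single_add[symmetric])

lemma prod_single_one:
  "finite S \<Longrightarrow> (\<Prod>j\<in>S. Poly_Mapping.single (g j) (1::'k::field)) = Poly_Mapping.single (\<Sum>j\<in>S. g j) 1"
  by (induction S rule: finite_induct) (auto simp: mult_single)

lemma subst_monom_id:
  assumes "is_id r X" "Poly_Mapping.keys m \<subseteq> {..r}"
  shows "subst_monom r X m = Poly_Mapping.single m (1::'k::field)"
proof -
  have "subst_monom r X m =
      (\<Prod>j\<in>Poly_Mapping.keys m. Poly_Mapping.single (Poly_Mapping.single j (Poly_Mapping.lookup m j)) 1)"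
    unfolding subst_monom_def by (rule prod.cong) (use assms in \<open>auto simp: lin_form_id Var_power\<close>)
  then show ?thesis by (simp add: prod_single_one sum_single_lookup)
qed

lemma subst_id:
  assumes "is_id r X" "poly_deg_le r d G"
  shows "subst r X G = G"
proof -
  have "subst r X G = (\<Sum>m\<in>Poly_Mapping.keys G. Poly_Mapping.single m (Poly_Mapping.lookup G m))"
    unfolding subst_eq_sum_subst_monom
    by (rule sum.cong) (use assms in \<open>auto simp: poly_deg_le_def subst_monom_id Const_mult_single\<close>)
  then show ?thesis by (simp add: sum_single_lookup)
qed

lemma subst_cong:
  assumes G: "poly_deg_le r d G" and XY: "\<And>j i. j \<le> r \<Longrightarrow> i \<le> r \<Longrightarrow> X j i = Y j i"
  shows "subst r X G = subst r Y G"
proof -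
  have "lin_form r X j = lin_form r Y j" if "j \<le> r" for j
    unfolding lin_form_def using that XY by (intro sum.cong) auto
  moreover have "j \<le> r" if "m \<in> Poly_Mapping.keys G" "j \<in> Poly_Mapping.keys m" for m j
    using G that by (auto simp: poly_deg_le_def)
  ultimately have "subst_monom r X m = subst_monom r Y m" if "m \<in> Poly_Mapping.keys G" for m
    unfolding subst_monom_def using that by (intro prod.cong) auto
  then show ?thesis unfolding subst_eq_sum_subst_monom by (intro sum.cong) auto
qed

lemma subst_subst_inverse:
  "is_id r (mat_mult r X Y) \<Longrightarrow> poly_deg_le r d G \<Longrightarrow> subst r Y (subst r X G) = G"
  by (simp add: subst_subst subst_id)

lemma subst_nonzero:
  assumes "X \<in> GL r" "poly_deg_le r d G" "G \<noteq> 0"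
  shows "subst r X G \<noteq> 0"
  by (metis GL_iff assms subst_subst_inverse subst_zero)

section \<open>The distance \<open>\<Delta>\<close>\<close>

definition Delta_at :: "nat \<Rightarrow> 'k::field mpoly \<Rightarrow> (nat \<Rightarrow> int) \<Rightarrow> real"
  where "Delta_at r G lam = Min ((\<lambda>m. pairing r lam m) ` Poly_Mapping.keys G) / ops_norm r lam"

lemma Delta_eq_SUP_Delta_at: "Delta r G = (SUP lam\<in>OPS r. Delta_at r G lam)"
  by (simp add: Delta_def Delta_at_def)

lemma OPS_nonempty:
  assumes "1 \<le> r"
  shows "OPS r \<noteq> {}"
proof -
  define lam :: "nat \<Rightarrow> int" where "lam = (\<lambda>i. (if i = 0 then 1 else 0) + (if i = 1 then -1 else 0))"
  have "(\<Sum>i\<le>r. lam i) = (\<Sum>i\<le>r. (if i = 0 then 1 else 0)) + (\<Sum>i\<le>r. (if i = 1 then -1 else 0))"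
    by (simp add: lam_def sum.distrib)
  also have "\<dots> = 0" using assms by simp
  finally have "lam \<in> OPS r" using assms by (auto simp: OPS_def lam_def intro!: exI[of _ 0])
  then show ?thesis by blast
qed

lemma ops_norm_pos: "lam \<in> OPS r \<Longrightarrow> 0 < ops_norm r lam"
  unfolding OPS_def ops_norm_def by (auto intro!: sum_pos2)

lemma abs_le_ops_norm: "i \<le> r \<Longrightarrow> \<bar>real_of_int (lam i)\<bar> \<le> ops_norm r lam"
proof -
  assume "i \<le> r"
  then have "(real_of_int (lam i))\<^sup>2 \<le> (\<Sum>i\<le>r. (real_of_int (lam i))\<^sup>2)"
    by (intro member_le_sum) auto
  then show ?thesis
    unfolding ops_norm_def by (metis real_sqrt_abs real_sqrt_le_mono)
qed

lemma ops_norm_comp_bij: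
  "bij_betw \<sigma> {..r} {..r} \<Longrightarrow> ops_norm r (lam \<circ> \<sigma>) = ops_norm r lam"
  unfolding ops_norm_def
  using sum.reindex_bij_betw[of \<sigma> "{..r}" "{..r}" "\<lambda>i. (real_of_int (lam i))\<^sup>2"] by simp

lemma OPS_comp_bij:
  assumes \<sigma>: "bij_betw \<sigma> {..r} {..r}" "\<And>i. r < i \<Longrightarrow> \<sigma> i = i" and lam: "lam \<in> OPS r"
  shows "lam \<circ> \<sigma> \<in> OPS r"
proof -
  have "(\<Sum>i\<le>r. (lam \<circ> \<sigma>) i) = 0"
    using sum.reindex_bij_betw[OF \<sigma>(1), of lam] lam by (simp add: OPS_def)
  moreover obtain i where "i \<le> r" "lam i \<noteq> 0" using lam by (auto simp: OPS_def)
  moreover have "\<exists>j\<le>r. \<sigma> j = i"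
    using bij_betw_imp_surj_on[OF \<sigma>(1)] \<open>i \<le> r\<close> by force
  ultimately show ?thesis using lam \<sigma>(2) by (auto simp: OPS_def)
qed

lemma Delta_at_le_deg:
  assumes G: "poly_deg_le r d G" "G \<noteq> 0" and lam: "lam \<in> OPS r"
  shows "Delta_at r G lam \<le> real d"
proof -
  obtain m where m: "m \<in> Poly_Mapping.keys G" using G(2) by fastforce
  let ?N = "ops_norm r lam"
  have "Min ((\<lambda>m. pairing r lam m) ` Poly_Mapping.keys G) \<le> pairing r lam m"
    using m by (intro Min_le) auto
  also have "\<dots> \<le> (\<Sum>i\<le>r. ?N * real (Poly_Mapping.lookup m i))"
    unfolding pairing_def using abs_le_ops_norm[of _ r lam]
    by (intro sum_mono mult_right_mono) (auto simp: abs_le_iff)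
  also have "\<dots> = ?N * real (deg_upto r m)"
    by (simp add: deg_upto_def sum_distrib_left)
  also have "\<dots> \<le> ?N * real d"
    using m G ops_norm_pos[OF lam] by (intro mult_left_mono) (auto simp: poly_deg_le_def)
  finally show ?thesis
    unfolding Delta_at_def using ops_norm_pos[OF lam] by (simp add: pos_divide_le_eq mult.commute)
qed

lemma Delta_at_le_Delta:
  assumes "poly_deg_le r d G" "G \<noteq> 0" "lam \<in> OPS r"
  shows "Delta_at r G lam \<le> Delta r G"
  unfolding Delta_eq_SUP_Delta_at using Delta_at_le_deg[OF assms(1,2)] assms(3)
  by (intro cSUP_upper bdd_aboveI2) auto

lemma Delta_at_ge:
  assumes "G \<noteq> 0" "lam \<in> OPS r" "\<And>m. m \<in> Poly_Mapping.keys G \<Longrightarrow> c \<le> pairing r lam m"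
  shows "c / ops_norm r lam \<le> Delta_at r G lam"
  unfolding Delta_at_def using assms ops_norm_pos[OF assms(2)]
  by (intro divide_right_mono Min.boundedI) auto

section \<open>Moving \<open>e\<close> to a given point\<close>

definition shear :: "(nat \<Rightarrow> 'k::field) \<Rightarrow> nat \<Rightarrow> nat \<Rightarrow> nat \<Rightarrow> 'k"
  where "shear p k = (\<lambda>j i. if i = k then p j else if i = j then 1 else 0)"

definition swap_mat :: "nat \<Rightarrow> nat \<Rightarrow> nat \<Rightarrow> 'k::field"
  where "swap_mat k = (\<lambda>j i. if i = Transposition.transpose 0 k j then 1 else 0)"

definition move_mat :: "nat \<Rightarrow> (nat \<Rightarrow> 'k::field) \<Rightarrow> nat \<Rightarrow> nat \<Rightarrow> nat \<Rightarrow> 'k"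
  where "move_mat r p k = mat_mult r (shear p k) (swap_mat k)"

lemma shear_GL:
  fixes p :: "nat \<Rightarrow> 'k::field"
  assumes pk: "p k \<noteq> 0" and k: "k \<le> r"
  shows "shear p k \<in> GL r"
proof -
  define S' :: "nat \<Rightarrow> nat \<Rightarrow> 'k" where
    "S' = (\<lambda>j i. if i = k then (if j = k then 1 / p k else - p j / p k) else if i = j then 1 else 0)"
  have "mat_mult r (shear p k) S' i l = (if i = l then 1 else 0)" if "i \<le> r" "l \<le> r" for i l
  proof -
    have "mat_mult r (shear p k) S' i l =
        (\<Sum>j\<le>r. (if j = k then p i * S' k l else 0) + (if j = i \<and> i \<noteq> k then S' i l else 0))"
      unfolding mat_mult_def by (rule sum.cong) (auto simp: shear_def)
    also have "\<dots> = p i * S' k l + (if i \<noteq> k then S' i l else 0)"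
      using k that by (simp add: sum.distrib)
    finally show ?thesis using pk by (auto simp: S'_def field_simps)
  qed
  then have "is_id r (mat_mult r (shear p k) S')" by (simp add: is_id_def)
  then show ?thesis using GL_iff by blast
qed

lemma swap_mat_GL:
  assumes k: "k \<le> r"
  shows "(swap_mat k :: nat \<Rightarrow> nat \<Rightarrow> 'k::field) \<in> GL r"
proof -
  have "mat_mult r (swap_mat k) (swap_mat k :: nat \<Rightarrow> nat \<Rightarrow> 'k) i l = (if i = l then 1 else 0)" if "i \<le> r" "l \<le> r" for i l
  proof -
    have "mat_mult r (swap_mat k) (swap_mat k) i l =
        (\<Sum>j\<le>r. if j = Transposition.transpose 0 k i then (if l = Transposition.transpose 0 k j then 1 else 0) else 0)"
      unfolding mat_mult_def by (rule sum.cong) (auto simp: swap_mat_def)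
    also have "\<dots> = (if l = i then 1 else 0)"
      using k that by (simp add: Transposition.transpose_def split: if_split_asm)
    finally show ?thesis by auto
  qed
  then have "is_id r (mat_mult r (swap_mat k) (swap_mat k :: nat \<Rightarrow> nat \<Rightarrow> 'k))"
    by (simp add: is_id_def)
  then show ?thesis using GL_iff by blast
qed

lemma move_mat_GL: "p k \<noteq> 0 \<Longrightarrow> k \<le> r \<Longrightarrow> move_mat r p k \<in> GL r"
  by (simp add: move_mat_def GL_mat_mult shear_GL swap_mat_GL)

lemma move_mat_col0: "k \<le> r \<Longrightarrow> j \<le> r \<Longrightarrow> move_mat r p k j 0 = p j"
proof -
  assume "k \<le> r" "j \<le> r"
  have "move_mat r p k j 0 = (\<Sum>i\<le>r. if i = k then shear p k j k else 0)"
    unfolding move_mat_def mat_mult_def by (rule sum.cong) (auto simp: swap_mat_def transpose_eq_iff)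
  then show ?thesis using \<open>k \<le> r\<close> by (simp add: shear_def)
qed

lemma Delta_at_le_Delta_at_move:
  assumes F: "poly_deg_le r d F" and k: "k \<le> r" and lam: "lam \<in> OPS r"
    and kmax: "\<And>j. j \<le> r \<Longrightarrow> p j \<noteq> 0 \<Longrightarrow> lam j \<le> lam k"
    and G0: "subst r (move_mat r p k) F \<noteq> 0"
  shows "Delta_at r F lam \<le> Delta_at r (subst r (move_mat r p k) F) (lam \<circ> Transposition.transpose 0 k)"
proof -
  let ?\<sigma> = "Transposition.transpose 0 k"
  have \<sigma>: "bij_betw ?\<sigma> {..r} {..r}" "\<And>i. r < i \<Longrightarrow> ?\<sigma> i = i"
    using k by (auto simp: Transposition.transpose_def)
  define c where "c = Min ((\<lambda>m. pairing r lam m) ` Poly_Mapping.keys F)"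
  have c: "c \<le> pairing r lam m" if "m \<in> Poly_Mapping.keys F" for m
    unfolding c_def using that by (intro Min_le) auto
  have sheared: "c \<le> pairing r lam m" if "m \<in> Poly_Mapping.keys (subst r (shear p k) F)" for m
    by (rule pairing_subst_ge[OF F _ c that]) (auto simp: shear_def kmax split: if_splits)
  have "c \<le> pairing r (lam \<circ> ?\<sigma>) m" if "m \<in> Poly_Mapping.keys (subst r (move_mat r p k) F)" for m
  proof (rule pairing_subst_ge[OF poly_deg_le_subst[OF F] _ sheared])
    show "m \<in> Poly_Mapping.keys (subst r (swap_mat k) (subst r (shear p k) F))"
      using that by (simp add: move_mat_def subst_subst)
  qed (auto simp: swap_mat_def split: if_splits)
  then have "c / ops_norm r (lam \<circ> ?\<sigma>) \<le> Delta_at r (subst r (move_mat r p k) F) (lam \<circ> ?\<sigma>)"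
    by (intro Delta_at_ge G0 OPS_comp_bij[OF \<sigma> lam])
  then show ?thesis
    by (simp add: Delta_at_def c_def ops_norm_comp_bij[OF \<sigma>(1)])
qed

lemma Delta_le_Delta_move:
  assumes F: "poly_deg_le r d F" "F \<noteq> 0" and p: "p \<in> proj_pts r" and r: "1 \<le> r"
  obtains k where "k \<le> r" "p k \<noteq> 0" "Delta r F \<le> Delta r (subst r (move_mat r p k) F)"
proof -
  define K where "K = {k. k \<le> r \<and> p k \<noteq> 0}"
  define G where "G k = subst r (move_mat r p k) F" for k
  have K: "finite K" "K \<noteq> {}" using p by (auto simp: K_def proj_pts_def)
  have G: "poly_deg_le r d (G k)" "G k \<noteq> 0" if "k \<in> K" for k
  proof -
    from that have "move_mat r p k \<in> GL r" by (simp add: K_def move_mat_GL)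
    then show "poly_deg_le r d (G k)" "G k \<noteq> 0"
      unfolding G_def using F by (simp_all add: poly_deg_le_subst subst_nonzero)
  qed
  have "Delta_at r F lam \<le> Max ((\<lambda>k. Delta r (G k)) ` K)" if lam: "lam \<in> OPS r" for lam
  proof -
    have "Max (lam ` K) \<in> lam ` K" using K by (intro Max_in) auto
    then obtain k where k: "k \<in> K" "lam k = Max (lam ` K)" by auto
    then have "Delta_at r F lam \<le> Delta_at r (G k) (lam \<circ> Transposition.transpose 0 k)"
      unfolding G_def using K G(2)[OF k(1)]
      by (intro Delta_at_le_Delta_at_move[OF F(1) _ lam]) (auto simp: K_def G_def)
    also have "\<dots> \<le> Delta r (G k)"
      using k(1) lam by (intro Delta_at_le_Delta[OF G[OF k(1)]] OPS_comp_bij)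
        (auto simp: K_def Transposition.transpose_def)
    also have "\<dots> \<le> Max ((\<lambda>k. Delta r (G k)) ` K)"
      using K k(1) by (intro Max_ge) auto
    finally show ?thesis .
  qed
  then have "Delta r F \<le> Max ((\<lambda>k. Delta r (G k)) ` K)"
    unfolding Delta_eq_SUP_Delta_at using OPS_nonempty[OF r] by (intro cSUP_least) auto
  moreover have "Max ((\<lambda>k. Delta r (G k)) ` K) \<in> (\<lambda>k. Delta r (G k)) ` K"
    using K by (intro Max_in) auto
  then obtain k where "k \<in> K" "Delta r (G k) = Max ((\<lambda>k. Delta r (G k)) ` K)" by auto
  ultimately show ?thesis using that by (auto simp: K_def G_def)
qed

section \<open>Multiplicities\<close>

lemma mult_e_le_subst:
  assumes G: "poly_deg_le r d G" "G \<noteq> 0" and CG: "subst r C G \<noteq> 0"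
    and C: "\<And>j. 1 \<le> j \<Longrightarrow> j \<le> r \<Longrightarrow> C j 0 = 0"
  shows "mult_e d G \<le> mult_e d (subst r C G)"
proof -
  define M where "M = Max ((\<lambda>m. Poly_Mapping.lookup m 0) ` Poly_Mapping.keys G)"
  have M_ge: "Poly_Mapping.lookup m 0 \<le> M" if "m \<in> Poly_Mapping.keys G" for m
    unfolding M_def using that by (intro Max_ge) auto
  have "M \<in> (\<lambda>m. Poly_Mapping.lookup m 0) ` Poly_Mapping.keys G"
    unfolding M_def using G(2) by (intro Max_in) auto
  then obtain m where m: "m \<in> Poly_Mapping.keys G" "Poly_Mapping.lookup m 0 = M" by auto
  have "mult_e d G \<le> d - M"
    unfolding mult_e_def using m by (intro Min_le) auto
  also have "\<dots> \<le> mult_e d (subst r C G)"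
    unfolding mult_e_def using CG lookup0_subst_le[of r d G C M, OF G(1) C M_ge]
    by (intro Min.boundedI) (auto intro: diff_le_mono2)
  finally show ?thesis .
qed

text \<open>The inverse of such a substitution again fixes the line through \<open>e\<close>, so
  \<open>mult_e_le_subst\<close> applies in both directions.\<close>

lemma mult_e_subst_fixing_e:
  assumes CG: "C \<in> GL r" and C: "\<And>j. 1 \<le> j \<Longrightarrow> j \<le> r \<Longrightarrow> C j 0 = 0" and G: "poly_deg_le r d G"
  shows "mult_e d (subst r C G) = mult_e d G"
proof (cases "G = 0")
  case False
  obtain C' where C'G: "C' \<in> GL r" and C'C: "is_id r (mat_mult r C' C)" and CC': "is_id r (mat_mult r C C')"
    using CG by (rule GL_inverseE)
  have col: "mat_mult r C' C j 0 = C' j 0 * C 0 0" for j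
  proof -
    have "mat_mult r C' C j 0 = (\<Sum>l\<le>r. if l = 0 then C' j 0 * C 0 0 else 0)"
      unfolding mat_mult_def by (rule sum.cong) (use C in auto)
    then show ?thesis by simp
  qed
  have "C' 0 0 * C 0 0 = 1" using C'C col[of 0] by (simp add: is_id_def)
  then have "C 0 0 \<noteq> 0" by auto
  then have C': "C' j 0 = 0" if "1 \<le> j" "j \<le> r" for j
    using C'C col[of j] that by (simp add: is_id_def)
  define H where "H = subst r C G"
  have H: "poly_deg_le r d H" "H \<noteq> 0"
    unfolding H_def using G False CG by (simp_all add: poly_deg_le_subst subst_nonzero)
  have C'H: "subst r C' H = G" unfolding H_def by (rule subst_subst_inverse[OF CC' G])
  have "mult_e d G \<le> mult_e d H"
    unfolding H_def using G False H(2) C by (intro mult_e_le_subst) (auto simp: H_def)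
  moreover have "mult_e d H \<le> mult_e d G"
    using mult_e_le_subst[OF H, of C'] C'H False C' by simp
  ultimately show ?thesis unfolding H_def by simp
qed simp

lemma mult_e_subst_eq_if_col0_eq:
  assumes AG: "A \<in> GL r" and BG: "B \<in> GL r" and AB: "\<And>i. i \<le> r \<Longrightarrow> A i 0 = B i 0"
    and G: "poly_deg_le r d G"
  shows "mult_e d (subst r A G) = mult_e d (subst r B G)"
proof -
  obtain A' where A'G: "A' \<in> GL r" and A'A: "is_id r (mat_mult r A' A)" and AA': "is_id r (mat_mult r A A')"
    using AG by (rule GL_inverseE)
  define C where "C = mat_mult r A' B"
  have C0: "C j 0 = 0" if "1 \<le> j" "j \<le> r" for j
  proof -
    have "C j 0 = mat_mult r A' A j 0" unfolding C_def mat_mult_def by (rule sum.cong) (auto simp: AB)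
    then show ?thesis using A'A that by (simp add: is_id_def)
  qed
  have "subst r C (subst r A G) = subst r (mat_mult r (mat_mult r A A') B) G"
    by (simp add: C_def subst_subst mat_mult_assoc)
  also have "\<dots> = subst r B G"
    by (rule subst_cong[OF G]) (simp add: mat_mult_id_left[OF AA'])
  finally have "subst r C (subst r A G) = subst r B G" .
  moreover have "mult_e d (subst r C (subst r A G)) = mult_e d (subst r A G)"
    using A'G BG C0 G unfolding C_def by (intro mult_e_subst_fixing_e GL_mat_mult poly_deg_le_subst) auto
  ultimately show ?thesis by simp
qed

lemma ex_GL_col0: "q \<in> proj_pts r \<Longrightarrow> \<exists>A. A \<in> GL r \<and> (\<forall>i\<le>r. A i 0 = q i)"
  by (auto simp: proj_pts_def intro!: move_mat_GL move_mat_col0)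

lemma mult_at_eq_mult_e:
  assumes q: "q \<in> proj_pts r" and BG: "B \<in> GL r" and Bq: "\<And>i. i \<le> r \<Longrightarrow> B i 0 = q i"
    and G: "poly_deg_le r d G"
  shows "mult_at r d G q = mult_e d (subst r B G)"
proof -
  define A where "A = (SOME A. A \<in> GL r \<and> (\<forall>i\<le>r. A i 0 = q i))"
  have "A \<in> GL r \<and> (\<forall>i\<le>r. A i 0 = q i)"
    unfolding A_def by (rule someI_ex[OF ex_GL_col0[OF q]])
  then show ?thesis
    unfolding mult_at_def A_def[symmetric] using BG Bq G by (intro mult_e_subst_eq_if_col0_eq) auto
qed

definition mat_vec :: "nat \<Rightarrow> (nat \<Rightarrow> nat \<Rightarrow> 'k::field) \<Rightarrow> (nat \<Rightarrow> 'k) \<Rightarrow> nat \<Rightarrow> 'k"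
  where "mat_vec r X q = (\<lambda>j. if j \<le> r then \<Sum>i\<le>r. X j i * q i else 0)"

lemma mat_vec_mat_vec: "mat_vec r X (mat_vec r Y q) = mat_vec r (mat_mult r X Y) q"
proof
  fix j
  have "(\<Sum>i\<le>r. X j i * mat_vec r Y q i) = (\<Sum>i\<le>r. \<Sum>l\<le>r. X j i * Y i l * q l)"
    by (rule sum.cong) (auto simp: mat_vec_def sum_distrib_left mult.assoc)
  also have "\<dots> = (\<Sum>l\<le>r. \<Sum>i\<le>r. X j i * Y i l * q l)" by (rule sum.swap)
  also have "\<dots> = (\<Sum>l\<le>r. mat_mult r X Y j l * q l)" by (simp add: mat_mult_def sum_distrib_right)
  finally show "mat_vec r X (mat_vec r Y q) j = mat_vec r (mat_mult r X Y) q j"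
    by (simp add: mat_vec_def)
qed

lemma mat_vec_id:
  assumes "is_id r X" "q \<in> proj_pts r"
  shows "mat_vec r X q = q"
proof
  fix j
  show "mat_vec r X q j = q j"
  proof (cases "j \<le> r")
    case True
    have "(\<Sum>i\<le>r. X j i * q i) = (\<Sum>i\<le>r. if i = j then q j else 0)"
      by (rule sum.cong) (use assms True in \<open>auto simp: is_id_def\<close>)
    then show ?thesis using True by (simp add: mat_vec_def)
  qed (use assms in \<open>auto simp: mat_vec_def proj_pts_def\<close>)
qed

lemma mat_vec_proj_pts:
  assumes XG: "X \<in> GL r" and q: "q \<in> proj_pts r"
  shows "mat_vec r X q \<in> proj_pts r"
proof -
  obtain X' where X'X: "is_id r (mat_mult r X' X)" using XG by (rule GL_inverseE)
  have "\<exists>i\<le>r. mat_vec r X q i \<noteq> 0"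
  proof (rule ccontr)
    assume "\<not> ?thesis"
    then have "mat_vec r X q = (\<lambda>_. 0)" by (auto simp: mat_vec_def fun_eq_iff)
    moreover have "q = mat_vec r X' (mat_vec r X q)" by (simp add: mat_vec_mat_vec mat_vec_id[OF X'X q])
    moreover have "mat_vec r X' (\<lambda>_. 0) = (\<lambda>_. 0)" by (rule ext) (simp add: mat_vec_def)
    ultimately have "q = (\<lambda>_. 0)" by simp
    then show False using q by (simp add: proj_pts_def)
  qed
  then show ?thesis by (auto simp: proj_pts_def mat_vec_def)
qed

lemma mult_at_subst:
  assumes XG: "X \<in> GL r" and q: "q \<in> proj_pts r" and G: "poly_deg_le r d G"
  shows "mult_at r d (subst r X G) q = mult_at r d G (mat_vec r X q)"
proof -
  obtain A where A: "A \<in> GL r" "\<And>i. i \<le> r \<Longrightarrow> A i 0 = q i" using ex_GL_col0[OF q] by blast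
  have "mult_at r d (subst r X G) q = mult_e d (subst r (mat_mult r X A) G)"
    using A G by (simp add: mult_at_eq_mult_e[OF q] poly_deg_le_subst subst_subst)
  also have "\<dots> = mult_at r d G (mat_vec r X q)"
    using A G XG mat_vec_proj_pts[OF XG q]
    by (intro mult_at_eq_mult_e[symmetric] GL_mat_mult) (auto simp: mat_mult_def mat_vec_def)
  finally show ?thesis .
qed

lemma finite_mult_at_range: "finite ((\<lambda>p. mult_at r d G p) ` proj_pts r)"
proof (rule finite_subset)
  have "mult_e d H \<in> {..d} \<union> {Min {}}" for H :: "'a::field mpoly"
  proof (cases "Poly_Mapping.keys H = {}")
    case False
    then have "mult_e d H \<in> (\<lambda>m. d - Poly_Mapping.lookup m 0) ` Poly_Mapping.keys H"
      unfolding mult_e_def by (intro Min_in) auto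
    then show ?thesis by auto
  qed (simp add: mult_e_def)
  then show "(\<lambda>p. mult_at r d G p) ` proj_pts r \<subseteq> {..d} \<union> {Min {}}"
    by (auto simp: mult_at_def)
qed simp

lemma mult_max_attained: "\<exists>p\<in>proj_pts r. mult_at r d G p = mult_max r d G"
proof -
  have "(\<lambda>i. if i = 0 then 1 else 0 :: 'a::field) \<in> proj_pts r" by (auto simp: proj_pts_def)
  then have "mult_max r d G \<in> (\<lambda>p. mult_at r d G p) ` proj_pts r"
    unfolding mult_max_def using finite_mult_at_range by (intro Max_in) auto
  then show ?thesis by auto
qed

lemma mult_max_subst:
  fixes X :: "nat \<Rightarrow> nat \<Rightarrow> 'k::field"
  assumes XG: "X \<in> GL r" and G: "poly_deg_le r d G"
  shows "mult_max r d (subst r X G) = mult_max r d G"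
proof -
  obtain Y where YG: "Y \<in> GL r" and XY: "is_id r (mat_mult r X Y)" using XG by (rule GL_inverseE)
  have "mat_vec r X ` proj_pts r = proj_pts r"
  proof
    show "proj_pts r \<subseteq> mat_vec r X ` proj_pts r"
    proof
      fix p :: "nat \<Rightarrow> 'k" assume p: "p \<in> proj_pts r"
      then have "p = mat_vec r X (mat_vec r Y p)" by (simp add: mat_vec_mat_vec mat_vec_id[OF XY])
      then show "p \<in> mat_vec r X ` proj_pts r" using mat_vec_proj_pts[OF YG p] by blast
    qed
  qed (use mat_vec_proj_pts[OF XG] in blast)
  then have "(\<lambda>p. mult_at r d G p) ` proj_pts r = (\<lambda>p. mult_at r d G (mat_vec r X p)) ` proj_pts r"
    by (metis image_image)
  also have "\<dots> = (\<lambda>p. mult_at r d (subst r X G) p) ` proj_pts r"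
    by (rule image_cong) (simp_all add: mult_at_subst[OF XG _ G])
  finally show ?thesis by (simp add: mult_max_def)
qed

lemma mult_max_act: "g \<in> GL r \<Longrightarrow> poly_deg_le r d f \<Longrightarrow> mult_max r d (act r g f) = mult_max r d f"
  by (simp add: act_eq_subst mult_max_subst GL_transpose)

section \<open>The supremum of \<open>\<Delta>\<close> over an orbit is attained\<close>

lemma finite_monomials_deg_le: "finite {m :: nat \<Rightarrow>\<^sub>0 nat. Poly_Mapping.keys m \<subseteq> {..r} \<and> deg_upto r m \<le> d}"
  (is "finite ?K")
proof -
  let ?h = "\<lambda>m. restrict (Poly_Mapping.lookup m) {..r}"
  have "inj_on ?h ?K"
  proof (rule inj_onI)
    fix m m' assume m: "m \<in> ?K" and m': "m' \<in> ?K" and eq: "?h m = ?h m'"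
    show "m = m'"
    proof (rule poly_mapping_eqI)
      fix i
      show "Poly_Mapping.lookup m i = Poly_Mapping.lookup m' i"
      proof (cases "i \<le> r")
        case False
        then have "i \<notin> Poly_Mapping.keys m" "i \<notin> Poly_Mapping.keys m'" using m m' by auto
        then show ?thesis by (simp add: not_in_keys_iff_lookup_eq_zero)
      qed (use fun_cong[OF eq, of i] in simp)
    qed
  qed
  moreover have "?h ` ?K \<subseteq> PiE {..r} (\<lambda>_. {..d})"
  proof
    fix x assume "x \<in> ?h ` ?K"
    then obtain m where m: "m \<in> ?K" "x = ?h m" by auto
    have "Poly_Mapping.lookup m i \<le> deg_upto r m" if "i \<le> r" for i
      unfolding deg_upto_def by (rule member_le_sum) (use that in auto)
    then show "x \<in> PiE {..r} (\<lambda>_. {..d})" using m by force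
  qed
  then have "finite (?h ` ?K)" by (rule finite_subset) (simp add: finite_PiE)
  ultimately show ?thesis using finite_imageD by blast
qed

lemma finite_Delta_orbit:
  assumes "poly_deg_le r d f"
  shows "finite ((\<lambda>h. Delta r (act r h f)) ` GL r)"
proof (rule finite_subset)
  let ?K = "{m :: nat \<Rightarrow>\<^sub>0 nat. Poly_Mapping.keys m \<subseteq> {..r} \<and> deg_upto r m \<le> d}"
  let ?\<delta> = "\<lambda>S. SUP lam\<in>OPS r. Min ((\<lambda>m. pairing r lam m) ` S) / ops_norm r lam"
  have "Poly_Mapping.keys (act r h f) \<subseteq> ?K" for h
    using poly_deg_le_subst[OF assms] by (auto simp: act_eq_subst poly_deg_le_def)
  then show "(\<lambda>h. Delta r (act r h f)) ` GL r \<subseteq> ?\<delta> ` Pow ?K"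
    by (auto simp: Delta_def)
  show "finite (?\<delta> ` Pow ?K)" by (simp add: finite_monomials_deg_le)
qed

lemma Delta_orbit_max_attained:
  assumes "poly_deg_le r d f"
  obtains g0 where "g0 \<in> GL r" "Delta r (act r g0 f) = (SUP h\<in>GL r. Delta r (act r h f))"
    "\<And>h. h \<in> GL r \<Longrightarrow> Delta r (act r h f) \<le> Delta r (act r g0 f)"
proof -
  let ?V = "(\<lambda>h. Delta r (act r h f)) ` GL r"
  have V: "finite ?V" "?V \<noteq> {}" using finite_Delta_orbit[OF assms] GL_id by blast+
  then have "Max ?V \<in> ?V" by (rule Max_in)
  then obtain g0 where "g0 \<in> GL r" "Delta r (act r g0 f) = Max ?V" by auto
  moreover have "Delta r (act r h f) \<le> Max ?V" if "h \<in> GL r" for h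
    using V(1) that by (intro Max_ge) auto
  ultimately show ?thesis using that cSup_eq_Max[OF V] by simp
qed

theorem lemma4p2:
  fixes f :: "'k::field mpoly" and r d :: nat
  assumes "alg_closed_field TYPE('k)"
    and "1 \<le> r"
    and "is_form r d f"
    and "unstable r f"
  shows "\<exists>g\<in>GL r.
     Delta r (act r g f) = (SUP h\<in>GL r. Delta r (act r h f)) \<and>
     mult_max r d f = mult_max r d (act r g f) \<and>
     mult_max r d (act r g f) = mult_e d (act r g f)"
proof -
  have f: "poly_deg_le r d f" "f \<noteq> 0"
    using assms(3) by (simp_all add: is_form_imp_poly_deg_le is_form_def)
  obtain g0 where g0: "g0 \<in> GL r" "Delta r (act r g0 f) = (SUP h\<in>GL r. Delta r (act r h f))"
    and g0_max: "\<And>h. h \<in> GL r \<Longrightarrow> Delta r (act r h f) \<le> Delta r (act r g0 f)"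
    using Delta_orbit_max_attained[OF f(1)] by blast
  define F where "F = act r g0 f"
  have F: "poly_deg_le r d F" "F \<noteq> 0"
    unfolding F_def act_eq_subst using f g0(1) by (simp_all add: poly_deg_le_subst subst_nonzero GL_transpose)
  obtain p where p: "p \<in> proj_pts r" "mult_at r d F p = mult_max r d F"
    using mult_max_attained by blast
  obtain k where k: "k \<le> r" "p k \<noteq> 0" and move: "Delta r F \<le> Delta r (subst r (move_mat r p k) F)"
    using Delta_le_Delta_move[OF F p(1) assms(2)] by blast
  define g where "g = mat_mult r (mat_transpose (move_mat r p k)) g0"
  have g: "g \<in> GL r" unfolding g_def using g0(1) k by (simp add: GL_mat_mult GL_transpose move_mat_GL)
  have "act r g f = act r (mat_transpose (move_mat r p k)) F"
    by (simp add: g_def F_def act_act)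
  also have "\<dots> = subst r (move_mat r p k) F"
    by (simp add: act_eq_subst mat_transpose_def)
  finally have gf: "act r g f = subst r (move_mat r p k) F" .
  have "Delta r (act r g f) = (SUP h\<in>GL r. Delta r (act r h f))"
    using g0 g0_max[OF g] move unfolding gf F_def by simp
  moreover have "mult_max r d (act r g f) = mult_max r d f"
    using g f by (simp add: mult_max_act)
  moreover have "mult_max r d (act r g f) = mult_e d (act r g f)"
    using k p F g0 f unfolding gf
    by (simp add: mult_max_subst move_mat_GL mult_at_eq_mult_e[symmetric] move_mat_col0 F_def mult_max_act)
  ultimately show ?thesis using g by auto
qed

end
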